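(* Let $d,m\ge1$ be integers, $B\ge0$, $M\in\mathbb N_0$, and $f\in\mathcal F_{d,m,B}$. Let $\tilde L$ be a log-partition estimator, i.e. a map $g\mapsto\tilde L_g\in\mathbb R$, with worst-case error $E\ge0$ on $\mathcal F_{d,m,B}$, i.e. $|\tilde L_g-L_g|\le E$ for all $g\in\mathcal F_{d,m,B}$. Let $\tilde P_f$ be the distribution of the output of the following bisection sampling procedure: for a hyperrectangle $\mathcal Z=\prod_{i=1}^d[z_i,z_i+h_i]$ define $f_{\mathcal Z}:\mathcal X\to\mathbb R$, $f_{\mathcal Z}(x)=f(z_1+h_1x_1,\dots,z_d+h_dx_d)$; set $\mathcal Z\leftarrow\mathcal X$; for $i=1,\dots,M$ and for $j=1,\dots,d$: split $\mathcal Z$ along coordinate $j$ into two equal-sized hyperrectangles $\mathcal Z_1,\mathcal Z_2$, compute $p_1=\sigma(\tilde L_{f_{\mathcal Z_1}}-\tilde L_{f_{\mathcal Z_2}})$ with $\sigma(u)=(1+e^{-u})^{-1}$, and replace $\mathcal Z$ by $\mathcal Z_1$ with probability $p_1$ and by $\mathcal Z_2$ otherwise; finally return a sample from the uniform distribution on $\mathcal Z$. Then \[D_{\sup\text{-}\log}(\tilde P_f,P_f)\le2MdE+2^{-M}d\|f\|_{C^1}.\]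
   Context: $\mathcal X=[0,1]^d$ with Lebesgue measure. For bounded measurable $g$: $Z_g=\int_{\mathcal X}e^g dx$, $L_g=\log Z_g$, $P_g$ the distribution with density $e^g/Z_g$. $\|f\|_{C^m}=\sup_{\alpha\in\mathbb N_0^d,|\alpha|_1\le m}\|\partial^\alpha f\|_\infty$ and $\mathcal F_{d,m,B}=\{f\in C^m(\mathcal X):\|f\|_{C^m}\le B\}$. $D_{\sup\text{-}\log}(P,Q)=\|\log(dP/dQ)\|_\infty$ (essential sup over $\mathcal X$; $\infty$ unless mutually absolutely continuous). *)

theory Defs
  imports "HOL-Probability.Probability"
begin

section \<open>The unit cube X = [0,1]^d, with d = CARD('n)\<close>

definition ucube :: "(real^'n) set" where
  "ucube = {x. \<forall>i. 0 \<le> x$i \<and> x$i \<le> 1}"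

text \<open>Partial derivative along coordinate i, taken within the cube (one-sided at the
boundary).\<close>
definition cube_line :: "real^'n \<Rightarrow> 'n \<Rightarrow> real \<Rightarrow> real^'n" where
  "cube_line x i t = x + t *\<^sub>R axis i 1"

definition partial :: "'n \<Rightarrow> (real^'n \<Rightarrow> real) \<Rightarrow> real^'n \<Rightarrow> real" where
  "partial i g x = vector_derivative (\<lambda>t. g (cube_line x i t))
                      (at 0 within {t. cube_line x i t \<in> ucube})"

text \<open>Iterated partial derivative along a list of directions
 (a multi-index alpha corresponds to any list with alpha_i occurrences of i).\<close>
fun iter_partial :: "'n list \<Rightarrow> (real^'n \<Rightarrow> real) \<Rightarrow> real^'n \<Rightarrow> real" where
  "iter_partial [] g = g"
| "iter_partial (i # is) g = partial i (iter_partial is g)"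

definition is_Cm :: "nat \<Rightarrow> (real^'n \<Rightarrow> real) \<Rightarrow> bool" where
  "is_Cm m g \<longleftrightarrow>
     (\<forall>is. length is \<le> m \<longrightarrow> continuous_on ucube (iter_partial is g)) \<and>
     (\<forall>is. length is < m \<longrightarrow> (\<forall>i. \<forall>x\<in>ucube.
         ((\<lambda>t. iter_partial is g (cube_line x i t)) has_vector_derivative
             partial i (iter_partial is g) x) (at 0 within {t. cube_line x i t \<in> ucube})))"

definition Cnorm :: "nat \<Rightarrow> (real^'n \<Rightarrow> real) \<Rightarrow> real" where
  "Cnorm m g = Sup {\<bar>iter_partial is g x\<bar> | is x. length is \<le> m \<and> x \<in> ucube}"

definition Fclass :: "nat \<Rightarrow> real \<Rightarrow> (real^'n \<Rightarrow> real) set" where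
  "Fclass m B = {g. is_Cm m g \<and> Cnorm m g \<le> B}"

definition Zfun :: "(real^'n \<Rightarrow> real) \<Rightarrow> real" where
  "Zfun g = (LINT x:ucube|lborel. exp (g x))"

definition Lfun :: "(real^'n \<Rightarrow> real) \<Rightarrow> real" where
  "Lfun g = ln (Zfun g)"

definition Pdist :: "(real^'n \<Rightarrow> real) \<Rightarrow> (real^'n) measure" where
  "Pdist g = density lborel (\<lambda>x. ennreal (indicator ucube x * exp (g x) / Zfun g))"

text \<open>D(P,Q) = ess sup |log dP/dQ| (infinite unless P, Q mutually absolutely continuous).
RN_deriv Q P is the density dP/dQ.\<close>
definition D_suplog :: "'a measure \<Rightarrow> 'a measure \<Rightarrow> ereal" where
  "D_suplog P Q =
     (if absolutely_continuous Q P \<and> absolutely_continuous P Q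
      then esssup Q (\<lambda>x. ereal \<bar>ln (enn2real (RN_deriv Q P x))\<bar>)
      else \<infinity>)"

text \<open>A hyperrectangle prod_i [z_i, z_i + h_i] is represented by the pair (z, h).\<close>

definition rect_fun :: "(real^'n \<Rightarrow> real) \<Rightarrow> (real^'n::finite) \<times> (real^'n) \<Rightarrow> real^'n \<Rightarrow> real" where
  "rect_fun f Z x = f (\<chi> i. fst Z $ i + snd Z $ i * x $ i)"

definition sigmoid :: "real \<Rightarrow> real" where
  "sigmoid u = 1 / (1 + exp (- u))"

definition split1 :: "'n \<Rightarrow> (real^'n::finite) \<times> (real^'n) \<Rightarrow> (real^'n::finite) \<times> (real^'n)" where
  "split1 j Z = (fst Z, (\<chi> k. if k = j then snd Z $ k / 2 else snd Z $ k))"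

definition split2 :: "'n \<Rightarrow> (real^'n::finite) \<times> (real^'n) \<Rightarrow> (real^'n::finite) \<times> (real^'n)" where
  "split2 j Z = ((\<chi> k. if k = j then fst Z $ k + snd Z $ k / 2 else fst Z $ k),
                 (\<chi> k. if k = j then snd Z $ k / 2 else snd Z $ k))"

definition bisect_step :: "((real^'n \<Rightarrow> real) \<Rightarrow> real) \<Rightarrow> (real^'n \<Rightarrow> real) \<Rightarrow> 'n
      \<Rightarrow> (real^'n::finite) \<times> (real^'n) \<Rightarrow> ((real^'n::finite) \<times> (real^'n)) pmf" where
  "bisect_step Lt f j Z =
     bind_pmf (bernoulli_pmf
                 (sigmoid (Lt (rect_fun f (split1 j Z)) - Lt (rect_fun f (split2 j Z)))))
              (\<lambda>b. return_pmf (if b then split1 j Z else split2 j Z))"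

fun bisect_run :: "((real^'n \<Rightarrow> real) \<Rightarrow> real) \<Rightarrow> (real^'n \<Rightarrow> real) \<Rightarrow> 'n list
      \<Rightarrow> (real^'n::finite) \<times> (real^'n) \<Rightarrow> ((real^'n::finite) \<times> (real^'n)) pmf" where
  "bisect_run Lt f [] Z = return_pmf Z"
| "bisect_run Lt f (j # js) Z = bind_pmf (bisect_step Lt f j Z) (bisect_run Lt f js)"

definition bisect_schedule :: "(nat \<Rightarrow> 'n) \<Rightarrow> nat \<Rightarrow> 'n list" where
  "bisect_schedule ord M = concat (replicate M (map ord [0..<CARD('n)]))"

definition bisect_sampler ::
  "((real^'n \<Rightarrow> real) \<Rightarrow> real) \<Rightarrow> (nat \<Rightarrow> 'n) \<Rightarrow> nat \<Rightarrow> (real^'n \<Rightarrow> real) \<Rightarrow> (real^'n) measure" where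
  "bisect_sampler Lt ord M f =
     bind (measure_pmf (bisect_run Lt f (bisect_schedule ord M) (0, \<chi> i. 1)))
          (\<lambda>Z. uniform_measure lborel (cbox (fst Z) (fst Z + snd Z)))"

end

theory Submission
  imports Defs
begin

text \<open>Write m(Z) for the integral of exp f over a subrectangle Z of the cube. Rescaling Z to the
  cube only shrinks derivatives, so the rescaled f stays in the class and its log-partition
  function, ln (m(Z) / vol Z), is estimated up to E. Hence each bisection step takes a half Z' of Z
  with probability within a factor exp (2 E) of the exact conditional probability m(Z') / m(Z),
  and after the M d steps the output density on the final rectangle R is within exp (2 M d E) of
  m(R) / (m(X) vol R). The sides of R are 2^-M, so by the Lipschitz bound on f the mean value
  m(R) / vol R is within exp (2^-M d |f|_C1) of exp (f x) for every x in R. The two densities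
  therefore agree up to the product of these factors almost everywhere (neighbouring halves meet
  in a null hyperplane), which bounds the sup-log divergence.\<close>

section \<open>Multiplicative error bounds\<close>

definition within_factor :: "real \<Rightarrow> real \<Rightarrow> real \<Rightarrow> bool" where
  "within_factor r u v \<longleftrightarrow> u * exp (- r) \<le> v \<and> v \<le> u * exp r"

lemma within_factor_commute: "within_factor r u v \<longleftrightarrow> within_factor r v u"
  by (auto simp: within_factor_def exp_minus field_simps)

lemma within_factor_pos: "0 < u \<Longrightarrow> within_factor r u v \<Longrightarrow> 0 < v"
  unfolding within_factor_def by (smt (verit) exp_gt_zero mult_pos_pos)

lemma within_factor_exp:
  assumes "0 < u" "\<bar>a - ln u\<bar> \<le> r"
  shows "within_factor r u (exp a)"
proof -
  have "exp (ln u - r) \<le> exp a" "exp a \<le> exp (ln u + r)"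
    using assms(2) by (simp_all add: abs_le_iff)
  with assms(1) show ?thesis
    by (simp add: within_factor_def exp_diff exp_add exp_minus field_simps)
qed

lemma within_factor_abs_ln_divide_le:
  assumes "0 < u" "within_factor r u v"
  shows "\<bar>ln (v / u)\<bar> \<le> r"
proof -
  have v: "0 < v" using within_factor_pos[OF assms] .
  have "exp (- r) \<le> v / u" "v / u \<le> exp r"
    using assms by (simp_all add: within_factor_def field_simps)
  then have "- r \<le> ln (v / u)" "ln (v / u) \<le> ln (exp r)"
    using v assms(1) by (simp add: ln_ge_iff, intro ln_mono) simp_all
  then show ?thesis by (simp add: abs_le_iff)
qed

lemma within_factor_add:
  "within_factor r u v \<Longrightarrow> within_factor r u' v' \<Longrightarrow> within_factor r (u + u') (v + v')"
  by (simp add: within_factor_def distrib_right)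

lemma within_factor_mult:
  assumes "0 \<le> u" "0 \<le> u'" "within_factor r u v" "within_factor r' u' v'"
  shows "within_factor (r + r') (u * u') (v * v')"
proof -
  have "0 \<le> v" "0 \<le> v'"
    using assms by (auto simp: within_factor_def intro: order.trans[rotated])
  with assms have "u * exp (- r) * (u' * exp (- r')) \<le> v * v'" "v * v' \<le> u * exp r * (u' * exp r')"
    by (auto simp: within_factor_def intro!: mult_mono)
  moreover have "exp (- (r + r')) = exp (- r) * exp (- r')" "exp (r + r') = exp r * exp r'"
    by (simp_all flip: exp_add)
  ultimately show ?thesis by (simp add: within_factor_def ac_simps)
qed

lemma within_factor_divide:
  assumes "0 \<le> u" "0 < u'" "within_factor r u v" "within_factor r' u' v'"
  shows "within_factor (r + r') (u / u') (v / v')"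
proof -
  have "within_factor r' (inverse u') (inverse v')"
    using assms(2,4) within_factor_pos[OF assms(2,4)]
    by (auto simp: within_factor_def exp_minus field_simps)
  from within_factor_mult[OF assms(1) _ assms(3) this] assms(2) show ?thesis
    by (simp add: divide_inverse)
qed

lemma sigmoid_diff_eq: "sigmoid (a - b) = exp a / (exp a + exp b)"
  by (simp add: sigmoid_def exp_diff field_simps)

lemma one_minus_sigmoid: "1 - sigmoid u = sigmoid (- u)"
proof -
  have "0 < 1 + exp u" "0 < 1 + exp (- u)"
    by (simp_all add: add_pos_pos)
  then show ?thesis by (simp add: sigmoid_def exp_minus field_simps)
qed

lemma sigmoid_bounds: "0 \<le> sigmoid u" "sigmoid u \<le> 1"
  by (simp_all add: sigmoid_def add_pos_pos)

lemma within_factor_sigmoid_diff: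
  assumes "0 < \<alpha>" "0 < \<beta>" "\<bar>a - ln \<alpha>\<bar> \<le> E" "\<bar>b - ln \<beta>\<bar> \<le> E"
  shows "within_factor (2 * E) (\<alpha> / (\<alpha> + \<beta>)) (sigmoid (a - b))"
proof -
  have a: "within_factor E \<alpha> (exp a)" and b: "within_factor E \<beta> (exp b)"
    using assms by (simp_all add: within_factor_exp)
  have "within_factor (E + E) (\<alpha> / (\<alpha> + \<beta>)) (exp a / (exp a + exp b))"
    using assms(1,2) by (intro within_factor_divide a within_factor_add b) simp_all
  then show ?thesis by (simp only: sigmoid_diff_eq mult_2)
qed

section \<open>Sup-log divergence of densities\<close>

lemma absolutely_continuous_density_density:
  fixes s q :: "'a \<Rightarrow> real"
  assumes [measurable]: "s \<in> borel_measurable M" "q \<in> borel_measurable M"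
    and "AE x in M. q x \<le> 0 \<longrightarrow> s x \<le> 0"
  shows "absolutely_continuous (density M q) (density M s)"
  unfolding absolutely_continuous_def
proof
  fix A assume "A \<in> null_sets (density M q)"
  then have "A \<in> sets M" "AE x in M. x \<in> A \<longrightarrow> q x \<le> 0"
    by (simp_all add: null_sets_density_iff ennreal_eq_0_iff)
  with assms(3) show "A \<in> null_sets (density M s)"
    by (auto simp: null_sets_density_iff ennreal_eq_0_iff elim: AE_mp)
qed

lemma AE_RN_deriv_density_density:
  fixes s q :: "'a \<Rightarrow> real"
  assumes [measurable]: "s \<in> borel_measurable M" "q \<in> borel_measurable M"
    and "\<And>x. 0 \<le> s x" "\<And>x. 0 \<le> q x"
    and "sigma_finite_measure (density M q)"
    and zero: "AE x in M. q x = 0 \<longrightarrow> s x = 0"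
  shows "AE x in density M q. RN_deriv (density M q) (density M s) x = ennreal (s x / q x)"
proof -
  interpret Q: sigma_finite_measure "density M q" by fact
  have "AE x in M. ennreal (q x) * ennreal (s x / q x) = ennreal (s x)"
    using zero by eventually_elim (use assms(3,4) in \<open>auto simp flip: ennreal_mult\<close>)
  then have "density M (\<lambda>x. ennreal (q x) * ennreal (s x / q x)) = density M s"
    by (intro density_cong) simp_all
  then have "density (density M q) (\<lambda>x. s x / q x) = density M s"
    by (simp add: density_density_eq)
  then show ?thesis
    by (subst eq_commute) (intro Q.RN_deriv_unique; simp)
qed

lemma D_suplog_density_le:
  fixes s q :: "'a \<Rightarrow> real"
  assumes [measurable]: "s \<in> borel_measurable M" "q \<in> borel_measurable M"
    and nonneg: "\<And>x. 0 \<le> s x" "\<And>x. 0 \<le> q x"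
    and "sigma_finite_measure (density M q)"
    and zero: "AE x in M. q x = 0 \<longrightarrow> s x = 0"
    and ratio: "AE x in M. 0 < q x \<longrightarrow> within_factor C (q x) (s x)"
  shows "D_suplog (density M s) (density M q) \<le> ereal C"
proof -
  have "AE x in density M q. 0 < s x / q x \<and> \<bar>ln (s x / q x)\<bar> \<le> C"
    using ratio
    by (subst AE_density) (auto elim!: AE_mp simp: within_factor_abs_ln_divide_le within_factor_pos)
  with AE_RN_deriv_density_density[OF assms(1-6)]
  have "AE x in density M q.
      ereal \<bar>ln (enn2real (RN_deriv (density M q) (density M s) x))\<bar> \<le> ereal C"
    by eventually_elim simp
  then have "esssup (density M q) (\<lambda>x. ereal \<bar>ln (enn2real (RN_deriv (density M q) (density M s) x))\<bar>)
      \<le> ereal C"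
    by (intro esssup_I) measurable
  moreover have "AE x in M. q x \<le> 0 \<longrightarrow> s x \<le> 0"
    using zero by eventually_elim (metis nonneg(2) antisym order_refl)
  then have "absolutely_continuous (density M q) (density M s)"
    by (rule absolutely_continuous_density_density[OF assms(1,2)])
  moreover have "AE x in M. s x \<le> 0 \<longrightarrow> q x \<le> 0"
    using ratio by eventually_elim (meson not_le within_factor_pos)
  then have "absolutely_continuous (density M s) (density M q)"
    by (rule absolutely_continuous_density_density[OF assms(2,1)])
  ultimately show ?thesis
    unfolding D_suplog_def by (subst if_P) (blast, assumption)
qed

section \<open>Lipschitz bound on the unit cube\<close>

lemma ucube_eq_cbox: "ucube = cbox (0::real^'n) 1"
  by (auto simp: ucube_def mem_box_cart)

lemma abs_iter_partial_le_Cnorm: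
  fixes g :: "real^'n \<Rightarrow> real"
  assumes "is_Cm m g" "length is \<le> m" "x \<in> ucube"
  shows "\<bar>iter_partial is g x\<bar> \<le> Cnorm m g"
proof -
  let ?S = "{\<bar>iter_partial is g x\<bar> | is x. length is \<le> m \<and> x \<in> ucube}"
  have S_eq: "?S = (\<Union>is\<in>{is. set is \<subseteq> UNIV \<and> length is \<le> m}. (\<lambda>x. \<bar>iter_partial is g x\<bar>) ` ucube)"
    by auto
  have "bounded ((\<lambda>x. \<bar>iter_partial is g x\<bar>) ` ucube)" if "length is \<le> m" for "is"
  proof -
    have "continuous_on ucube (\<lambda>x. \<bar>iter_partial is g x\<bar>)"
      using assms(1) that by (auto simp: is_Cm_def intro!: continuous_intros)
    then show ?thesis
      by (intro compact_imp_bounded compact_continuous_image) (simp_all add: ucube_eq_cbox)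
  qed
  then have "bounded ?S"
    unfolding S_eq by (intro bounded_UN finite_lists_length_le) auto
  then show ?thesis
    unfolding Cnorm_def using assms by (intro cSup_upper bounded_imp_bdd_above) auto
qed

lemma Cnorm_nonneg: "is_Cm m g \<Longrightarrow> 0 \<le> Cnorm m g"
  using abs_iter_partial_le_Cnorm[of m g "[]" 0] by (force simp: ucube_def)

lemma is_Cm_mono: "is_Cm m g \<Longrightarrow> k \<le> m \<Longrightarrow> is_Cm k g"
  unfolding is_Cm_def by (meson le_trans less_le_trans)

lemma Fclass_is_Cm1: "f \<in> Fclass m B \<Longrightarrow> 1 \<le> m \<Longrightarrow> is_Cm 1 f"
  unfolding Fclass_def using is_Cm_mono by blast

lemma is_Cm_continuous_on: "is_Cm m g \<Longrightarrow> continuous_on ucube g"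
  unfolding is_Cm_def by (metis iter_partial.simps(1) list.size(3) le0)

lemma is_Cm_has_vector_derivative:
  assumes "is_Cm m g" "length is < m" "x \<in> ucube"
  shows "((\<lambda>t. iter_partial is g (cube_line x i t)) has_vector_derivative partial i (iter_partial is g) x)
           (at 0 within {t. cube_line x i t \<in> ucube})"
  using assms unfolding is_Cm_def by blast

lemma cube_line_nth: "cube_line x i t $ k = x $ k + (if k = i then t else 0)"
  by (simp add: cube_line_def axis_def)

lemma cube_line_in_ucube_iff:
  assumes "x \<in> ucube"
  shows "cube_line x i t \<in> ucube \<longleftrightarrow> - x $ i \<le> t \<and> t \<le> 1 - x $ i"
  using assms by (auto simp: ucube_def cube_line_nth dest: spec[of _ i])

lemma partial_eqI:
  assumes "x \<in> ucube"
    and "((\<lambda>t. g (cube_line x i t)) has_vector_derivative D) (at 0 within {t. cube_line x i t \<in> ucube})"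
  shows "partial i g x = D"
proof -
  have "{t. cube_line x i t \<in> ucube} = {- x $ i .. 1 - x $ i}"
    using cube_line_in_ucube_iff[OF assms(1)] by auto
  moreover have "0 islimpt {- x $ i .. 1 - x $ i}"
    using assms(1) by (subst islimpt_Icc) (auto simp: ucube_def)
  ultimately have "at 0 within {t. cube_line x i t \<in> ucube} \<noteq> bot"
    by (simp add: trivial_limit_within)
  then show ?thesis
    unfolding partial_def by (rule vector_derivative_within[OF _ assms(2)])
qed

lemma abs_diff_cube_line_le:
  fixes f :: "real^'n \<Rightarrow> real"
  assumes f: "is_Cm 1 f" and x: "x \<in> ucube" and x': "cube_line x i t \<in> ucube"
  shows "\<bar>f (cube_line x i t) - f x\<bar> \<le> \<bar>t\<bar> * Cnorm 1 f"
proof -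
  define S where "S = closed_segment 0 t"
  have "- x $ i \<le> t" "t \<le> 1 - x $ i"
    using x' by (simp_all add: cube_line_in_ucube_iff[OF x])
  moreover have "0 \<le> x $ i" "x $ i \<le> 1"
    using x by (simp_all add: ucube_def)
  ultimately have S_ucube: "cube_line x i s \<in> ucube" if "s \<in> S" for s
    using that
    by (auto simp: cube_line_in_ucube_iff[OF x] S_def closed_segment_eq_real_ivl split: if_splits)
  have "((\<lambda>r. f (cube_line x i r)) has_vector_derivative partial i f (cube_line x i s)) (at s within S)"
    if s: "s \<in> S" for s
  proof -
    let ?y = "cube_line x i s"
    have shift: "cube_line ?y i (r - s) = cube_line x i r" for r
      by (simp add: cube_line_def algebra_simps)
    have "(\<lambda>r. r - s) ` S \<subseteq> {u. cube_line ?y i u \<in> ucube}"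
      using S_ucube shift by auto
    with is_Cm_has_vector_derivative[OF f _ S_ucube[OF s], of "[]" i]
    have "((\<lambda>u. f (cube_line ?y i u)) has_vector_derivative partial i f ?y)
            (at ((\<lambda>r. r - s) s) within (\<lambda>r. r - s) ` S)"
      by (auto intro: has_vector_derivative_within_subset)
    moreover have "((\<lambda>r. r - s) has_vector_derivative 1) (at s within S)"
      by (auto intro!: derivative_eq_intros)
    ultimately show ?thesis
      using vector_diff_chain_within by (fastforce simp: o_def shift)
  qed
  moreover have "onorm (\<lambda>h. h *\<^sub>R partial i f (cube_line x i s)) \<le> Cnorm 1 f" if "s \<in> S" for s
    using abs_iter_partial_le_Cnorm[OF f, of "[i]" "cube_line x i s"] S_ucube[OF that]
      onorm_scaleR_left[OF bounded_linear_ident, of "partial i f (cube_line x i s)"]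
    by (simp add: onorm_id)
  ultimately have "norm (f (cube_line x i t) - f (cube_line x i 0)) \<le> Cnorm 1 f * norm (t - 0)"
    by (intro differentiable_bound[of S]) (auto simp: S_def has_vector_derivative_def)
  then show ?thesis by (simp add: cube_line_def mult.commute)
qed

lemma abs_diff_le_Cnorm1:
  fixes f :: "real^'n \<Rightarrow> real"
  assumes f: "is_Cm 1 f" and x: "x \<in> ucube" and y: "y \<in> ucube"
  shows "\<bar>f x - f y\<bar> \<le> (\<Sum>i\<in>UNIV. \<bar>x $ i - y $ i\<bar>) * Cnorm 1 f"
proof -
  have "\<bar>f x - f y\<bar> \<le> (\<Sum>i\<in>S. \<bar>x $ i - y $ i\<bar>) * Cnorm 1 f"
    if "finite S" "y \<in> ucube" "\<forall>k. k \<notin> S \<longrightarrow> y $ k = x $ k" for S y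
    using that
  proof (induction S arbitrary: y rule: finite_induct)
    case empty
    then have "y = x" by (simp add: vec_eq_iff)
    then show ?case by simp
  next
    case (insert i S)
    define y' where "y' = cube_line y i (x $ i - y $ i)"
    have y'_nth: "y' $ k = (if k = i then x $ k else y $ k)" for k
      by (simp add: y'_def cube_line_nth)
    have y': "y' \<in> ucube"
      using x insert.prems(1) by (auto simp: ucube_def y'_nth)
    have "\<bar>f x - f y'\<bar> \<le> (\<Sum>k\<in>S. \<bar>x $ k - y' $ k\<bar>) * Cnorm 1 f"
      using insert.IH[OF y'] insert.prems(2) by (auto simp: y'_nth)
    also have "(\<Sum>k\<in>S. \<bar>x $ k - y' $ k\<bar>) = (\<Sum>k\<in>S. \<bar>x $ k - y $ k\<bar>)"
      using insert.hyps by (intro sum.cong) (auto simp: y'_nth)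
    finally have "\<bar>f x - f y'\<bar> \<le> (\<Sum>k\<in>S. \<bar>x $ k - y $ k\<bar>) * Cnorm 1 f" .
    moreover have "\<bar>f y' - f y\<bar> \<le> \<bar>x $ i - y $ i\<bar> * Cnorm 1 f"
      using abs_diff_cube_line_le[OF f insert.prems(1)] y' by (simp add: y'_def)
    ultimately show ?case
      using insert.hyps by (simp add: algebra_simps)
  qed
  from this[of UNIV y] y show ?thesis by simp
qed

section \<open>Rescaling to a subrectangle\<close>

definition cube_subrect :: "(real^'n) \<times> (real^'n) \<Rightarrow> bool" where
  "cube_subrect Z \<longleftrightarrow> (\<forall>i. 0 \<le> fst Z $ i \<and> 0 < snd Z $ i \<and> fst Z $ i + snd Z $ i \<le> 1)"

definition rect_map :: "(real^'n) \<times> (real^'n) \<Rightarrow> real^'n \<Rightarrow> real^'n" where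
  "rect_map Z x = (\<chi> i. fst Z $ i + snd Z $ i * x $ i)"

lemma rect_fun_eq: "rect_fun f Z = (\<lambda>x. f (rect_map Z x))"
  by (simp add: fun_eq_iff rect_fun_def rect_map_def)

lemma continuous_on_rect_map: "continuous_on S (rect_map Z)"
  unfolding rect_map_def by (intro continuous_intros)

lemma rect_map_in_ucube:
  assumes Z: "cube_subrect Z" and x: "x \<in> ucube"
  shows "rect_map Z x \<in> ucube"
proof -
  have "0 \<le> fst Z $ i + snd Z $ i * x $ i \<and> fst Z $ i + snd Z $ i * x $ i \<le> 1" for i
  proof -
    have "0 \<le> fst Z $ i" "0 < snd Z $ i" "fst Z $ i + snd Z $ i \<le> 1" "0 \<le> x $ i" "x $ i \<le> 1"
      using Z x by (auto simp: cube_subrect_def ucube_def)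
    moreover from this have "0 \<le> snd Z $ i * x $ i" "snd Z $ i * x $ i \<le> snd Z $ i"
      by (simp_all add: mult_left_le)
    ultimately show ?thesis by linarith
  qed
  then show ?thesis by (simp add: ucube_def rect_map_def)
qed

lemma rect_map_cube_line: "rect_map Z (cube_line x i t) = cube_line (rect_map Z x) i (snd Z $ i * t)"
  by (simp add: vec_eq_iff rect_map_def cube_line_nth algebra_simps)

lemma prod_list_sides_bounds:
  assumes "cube_subrect Z"
  shows "0 \<le> prod_list (map (\<lambda>k. snd Z $ k) is) \<and> prod_list (map (\<lambda>k. snd Z $ k) is) \<le> 1"
proof (induction "is")
  case (Cons i "is")
  have "0 < snd Z $ i" "snd Z $ i \<le> 1"
    using assms by (auto simp: cube_subrect_def dest: spec[of _ i])
  with Cons show ?case by (auto intro: mult_le_one)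
qed simp

lemma has_vector_derivative_cube_line_rect_map:
  assumes Z: "cube_subrect Z" and x: "x \<in> ucube"
    and G': "\<And>y. y \<in> ucube \<Longrightarrow> G' y = c * G (rect_map Z y)"
    and G: "((\<lambda>u. G (cube_line (rect_map Z x) i u)) has_vector_derivative D)
              (at 0 within {u. cube_line (rect_map Z x) i u \<in> ucube})"
  shows "((\<lambda>t. G' (cube_line x i t)) has_vector_derivative snd Z $ i * c * D)
           (at 0 within {t. cube_line x i t \<in> ucube})"
proof -
  define h where "h = snd Z $ i"
  define L where "L = {t. cube_line x i t \<in> ucube}"
  have "(\<lambda>t. h * t) ` L \<subseteq> {u. cube_line (rect_map Z x) i u \<in> ucube}"
    using rect_map_in_ucube[OF Z] by (auto simp: L_def h_def simp flip: rect_map_cube_line)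
  with G have "((\<lambda>u. G (cube_line (rect_map Z x) i u)) has_vector_derivative D)
                 (at ((\<lambda>t. h * t) 0) within (\<lambda>t. h * t) ` L)"
    by (auto intro: has_vector_derivative_within_subset)
  moreover have "((\<lambda>t. h * t) has_vector_derivative h) (at 0 within L)"
    by (auto intro!: derivative_eq_intros)
  ultimately have "((\<lambda>t. G (cube_line (rect_map Z x) i (h * t))) has_vector_derivative h * D)
                     (at 0 within L)"
    using vector_diff_chain_within by (fastforce simp: o_def)
  then have "((\<lambda>t. c * G (cube_line (rect_map Z x) i (h * t))) has_vector_derivative c * (h * D))
               (at 0 within L)"
    unfolding has_real_derivative_iff_has_vector_derivative[symmetric] by (rule DERIV_cmult)
  then have D': "((\<lambda>t. c * G (cube_line (rect_map Z x) i (h * t))) has_vector_derivative h * c * D)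
                   (at 0 within L)"
    by (simp add: ac_simps)
  have "0 \<in> L"
    using x by (simp add: L_def cube_line_def)
  moreover have "G' (cube_line x i t) = c * G (cube_line (rect_map Z x) i (h * t))" if "t \<in> L" for t
    using that by (simp add: L_def h_def G' flip: rect_map_cube_line)
  ultimately show ?thesis
    unfolding L_def h_def by (rule has_vector_derivative_transform[OF _ _ D'[unfolded L_def h_def]])
qed

lemma iter_partial_rect_map:
  assumes Z: "cube_subrect Z" and g: "is_Cm m g" and "length is \<le> m" and "x \<in> ucube"
  shows "iter_partial is (\<lambda>y. g (rect_map Z y)) x
           = prod_list (map (\<lambda>k. snd Z $ k) is) * iter_partial is g (rect_map Z x)"
  using assms(3,4)
proof (induction "is" arbitrary: x)
  case (Cons i "is")
  then show ?case
    using has_vector_derivative_cube_line_rect_map[OF Z Cons.prems(2) Cons.IH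
            is_Cm_has_vector_derivative[OF g _ rect_map_in_ucube[OF Z Cons.prems(2)]]]
    by (simp add: partial_eqI[OF Cons.prems(2)])
qed simp

lemma is_Cm_rect_map:
  assumes Z: "cube_subrect Z" and f: "is_Cm m f"
  shows "is_Cm m (\<lambda>y. f (rect_map Z y))"
proof -
  define g where "g = (\<lambda>y. f (rect_map Z y))"
  have g_eq: "iter_partial is g x = prod_list (map (\<lambda>k. snd Z $ k) is) * iter_partial is f (rect_map Z x)"
    if "length is \<le> m" "x \<in> ucube" for "is" x
    using iter_partial_rect_map[OF Z f that] by (simp add: g_def)
  have "continuous_on ucube (iter_partial is g)" if "length is \<le> m" for "is"
  proof -
    have "continuous_on ucube (\<lambda>x. prod_list (map (\<lambda>k. snd Z $ k) is) * iter_partial is f (rect_map Z x))"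
      using f that rect_map_in_ucube[OF Z]
      by (auto simp: is_Cm_def
               intro!: continuous_intros continuous_on_compose2[OF _ continuous_on_rect_map])
    then show ?thesis
      by (rule continuous_on_cong[THEN iffD1, rotated 2]) (simp_all add: g_eq that)
  qed
  moreover have "((\<lambda>t. iter_partial is g (cube_line x i t)) has_vector_derivative
                  partial i (iter_partial is g) x) (at 0 within {t. cube_line x i t \<in> ucube})"
    if "length is < m" "x \<in> ucube" for "is" i x
  proof -
    note D = has_vector_derivative_cube_line_rect_map[OF Z that(2) g_eq
               is_Cm_has_vector_derivative[OF f that(1) rect_map_in_ucube[OF Z that(2)]]]
    from D that show ?thesis by (simp add: partial_eqI[OF that(2) D])
  qed
  ultimately show ?thesis
    by (simp add: is_Cm_def flip: g_def)
qed

lemma Cnorm_rect_map_le: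
  assumes Z: "cube_subrect Z" and f: "is_Cm m f"
  shows "Cnorm m (\<lambda>y. f (rect_map Z y)) \<le> Cnorm m f"
  unfolding Cnorm_def[of m "\<lambda>y. f (rect_map Z y)"]
proof (rule cSup_least)
  fix r assume "r \<in> {\<bar>iter_partial is (\<lambda>y. f (rect_map Z y)) x\<bar> |is x. length is \<le> m \<and> x \<in> ucube}"
  then obtain "is" x where r: "r = \<bar>iter_partial is (\<lambda>y. f (rect_map Z y)) x\<bar>"
    and "is": "length is \<le> m" and x: "x \<in> ucube"
    by blast
  with prod_list_sides_bounds[OF Z, of "is"] have "r \<le> \<bar>iter_partial is f (rect_map Z x)\<bar>"
    by (simp add: iter_partial_rect_map[OF Z f] abs_mult mult_left_le_one_le)
  also have "\<dots> \<le> Cnorm m f"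
    by (rule abs_iter_partial_le_Cnorm[OF f "is" rect_map_in_ucube[OF Z x]])
  finally show "r \<le> Cnorm m f" .
qed (auto simp: ucube_def intro!: exI[of _ "[]"] exI[of _ "0::real^'n"])

lemma rect_fun_in_Fclass:
  assumes "cube_subrect Z" and "f \<in> Fclass m B"
  shows "rect_fun f Z \<in> Fclass m B"
proof -
  have f: "is_Cm m f" and "Cnorm m f \<le> B"
    using assms(2) by (simp_all add: Fclass_def)
  with Cnorm_rect_map_le[OF assms(1) f] have "Cnorm m (\<lambda>y. f (rect_map Z y)) \<le> B"
    by linarith
  then show ?thesis
    by (simp add: Fclass_def rect_fun_eq is_Cm_rect_map[OF assms(1) f])
qed

section \<open>Mass of a subrectangle\<close>

definition rect_set :: "(real^'n) \<times> (real^'n) \<Rightarrow> (real^'n) set" where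
  "rect_set Z = cbox (fst Z) (fst Z + snd Z)"

definition rect_vol :: "(real^'n) \<times> (real^'n) \<Rightarrow> real" where
  "rect_vol Z = (\<Prod>i\<in>UNIV. snd Z $ i)"

definition rect_mass :: "(real^'n \<Rightarrow> real) \<Rightarrow> (real^'n) \<times> (real^'n) \<Rightarrow> real" where
  "rect_mass f Z = (LINT x:rect_set Z|lborel. exp (f x))"

lemma mem_rect_set: "x \<in> rect_set Z \<longleftrightarrow> (\<forall>k. fst Z $ k \<le> x $ k \<and> x $ k \<le> fst Z $ k + snd Z $ k)"
  by (simp add: rect_set_def mem_box_cart)

lemma rect_set_sets [measurable]: "rect_set Z \<in> sets lborel"
  by (simp add: rect_set_def)

lemma fst_in_rect_set: "cube_subrect Z \<Longrightarrow> fst Z \<in> rect_set Z"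
  by (auto simp: mem_rect_set cube_subrect_def less_imp_le)

lemma rect_set_subset_ucube:
  assumes "cube_subrect Z"
  shows "rect_set Z \<subseteq> ucube"
proof
  fix x assume x: "x \<in> rect_set Z"
  have "0 \<le> x $ i \<and> x $ i \<le> 1" for i
    using x[unfolded mem_rect_set, rule_format, of i] assms[unfolded cube_subrect_def, rule_format, of i]
    by linarith
  then show "x \<in> ucube" by (simp add: ucube_def)
qed

lemma rect_vol_pos: "cube_subrect Z \<Longrightarrow> 0 < rect_vol Z"
  unfolding rect_vol_def cube_subrect_def by (auto intro: prod_pos)

lemma measure_rect_set: "cube_subrect Z \<Longrightarrow> measure lborel (rect_set Z) = rect_vol Z"
  using content_cbox_cart[of "fst Z" "fst Z + snd Z"] fst_in_rect_set[of Z]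
  by (auto simp: rect_set_def rect_vol_def)

lemma emeasure_rect_set: "cube_subrect Z \<Longrightarrow> emeasure lborel (rect_set Z) = ennreal (rect_vol Z)"
  using emeasure_lborel_cbox_finite[of "fst Z" "fst Z + snd Z"] measure_rect_set[of Z]
  by (simp add: rect_set_def emeasure_eq_ennreal_measure)

lemma set_integrable_rect_set:
  fixes g :: "real^'n \<Rightarrow> real"
  shows "continuous_on (rect_set Z) g \<Longrightarrow> set_integrable lborel (rect_set Z) g"
  unfolding set_integrable_def by (rule borel_integrable_compact) (simp_all add: rect_set_def)

lemma set_integral_const_rect_set:
  assumes "cube_subrect Z"
  shows "(LINT x:rect_set Z|lborel. c) = rect_vol Z * c"
  using set_integral_const[of "rect_set Z" lborel c] emeasure_rect_set[OF assms] measure_rect_set[OF assms]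
  by (simp add: rect_set_def)

lemma rect_map_in_rect_set_iff:
  assumes "cube_subrect Z"
  shows "rect_map Z x \<in> rect_set Z \<longleftrightarrow> x \<in> ucube"
proof -
  have "fst Z $ i \<le> fst Z $ i + snd Z $ i * x $ i \<and> fst Z $ i + snd Z $ i * x $ i \<le> fst Z $ i + snd Z $ i
          \<longleftrightarrow> 0 \<le> x $ i \<and> x $ i \<le> 1" for i
    using assms[unfolded cube_subrect_def, rule_format, of i]
    by (simp add: mult_le_cancel_left1 zero_le_mult_iff)
  then show ?thesis
    by (simp add: mem_rect_set rect_map_def ucube_def)
qed

lemma lborel_eq_density_distr_rect_map:
  fixes Z :: "(real^'n) \<times> (real^'n)"
  assumes Z: "cube_subrect Z"
  shows "lborel = density (distr lborel borel (rect_map Z)) (\<lambda>_. ennreal (rect_vol Z))"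
proof -
  define c where "c j = snd Z $ axis_index j" for j :: "real^'n"
  have "c j \<noteq> 0" for j
    using Z by (auto simp: c_def cube_subrect_def dest: spec[of _ "axis_index j"])
  moreover have "(\<lambda>x. fst Z + (\<Sum>j\<in>Basis. (c j * (x \<bullet> j)) *\<^sub>R j)) = rect_map Z"
    using vec_lambda_eq_sum[where f="\<lambda>k u. snd Z $ k * u"]
    by (auto simp: fun_eq_iff c_def rect_map_def vec_eq_iff)
  moreover have "(\<Prod>j\<in>Basis. \<bar>c j\<bar>) = rect_vol Z"
  proof -
    have "(\<Prod>j\<in>Basis. \<bar>c j\<bar>) = (\<Prod>k\<in>UNIV. \<bar>snd Z $ k\<bar>)"
      by (simp add: c_def Basis_vec_def UNION_singleton_eq_range prod.reindex axis_eq_axis inj_on_def)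
    also have "\<dots> = rect_vol Z"
      using Z by (simp add: rect_vol_def cube_subrect_def less_imp_le)
    finally show ?thesis .
  qed
  ultimately show ?thesis
    using lborel_affine_euclidean[of c "fst Z"] by simp
qed

lemma rect_mass_eq_Zfun:
  assumes Z: "cube_subrect Z" and f: "continuous_on ucube f"
  shows "rect_mass f Z = rect_vol Z * Zfun (rect_fun f Z)"
proof -
  define F where "F = (\<lambda>y. indicator (rect_set Z) y *\<^sub>R exp (f y))"
  have "continuous_on (rect_set Z) (\<lambda>x. exp (f x))"
    using f rect_set_subset_ucube[OF Z]
    by (auto intro!: continuous_intros intro: continuous_on_subset)
  then have [measurable]: "F \<in> borel_measurable borel"
    unfolding F_def by (intro borel_measurable_continuous_on_indicator) (simp_all add: rect_set_def)
  have rect_map_meas: "rect_map Z \<in> lborel \<rightarrow>\<^sub>M borel"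
    unfolding measurable_lborel2
    by (rule borel_measurable_continuous_onI[OF continuous_on_rect_map])
  have "rect_mass f Z = integral\<^sup>L lborel F"
    by (simp add: rect_mass_def set_lebesgue_integral_def F_def)
  also have "\<dots> = integral\<^sup>L (density (distr lborel borel (rect_map Z)) (\<lambda>_. ennreal (rect_vol Z))) F"
    by (subst lborel_eq_density_distr_rect_map[OF Z]) (rule refl)
  also have "\<dots> = integral\<^sup>L (distr lborel borel (rect_map Z)) (\<lambda>y. rect_vol Z *\<^sub>R F y)"
    using rect_vol_pos[OF Z] by (intro integral_density) auto
  also have "\<dots> = integral\<^sup>L lborel (\<lambda>x. rect_vol Z *\<^sub>R F (rect_map Z x))"
    by (intro integral_distr rect_map_meas) measurable
  also have "\<dots> = rect_vol Z * integral\<^sup>L lborel (\<lambda>x. indicator ucube x *\<^sub>R exp (f (rect_map Z x)))"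
    by (simp add: F_def rect_map_in_rect_set_iff[OF Z] indicator_def)
  also have "\<dots> = rect_vol Z * Zfun (rect_fun f Z)"
    by (simp add: Zfun_def set_lebesgue_integral_def rect_fun_eq)
  finally show ?thesis .
qed

lemma Lfun_rect_fun:
  assumes "cube_subrect Z" "continuous_on ucube f"
  shows "Lfun (rect_fun f Z) = ln (rect_mass f Z / rect_vol Z)"
  using rect_mass_eq_Zfun[OF assms] rect_vol_pos[OF assms(1)] by (simp add: Lfun_def)

lemma within_factor_rect_mass:
  assumes Z: "cube_subrect Z" and f: "is_Cm 1 f" and x: "x \<in> rect_set Z"
  shows "within_factor ((\<Sum>i\<in>UNIV. snd Z $ i) * Cnorm 1 f) (rect_vol Z * exp (f x)) (rect_mass f Z)"
proof -
  define W where "W = (\<Sum>i\<in>UNIV. snd Z $ i) * Cnorm 1 f"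
  have close: "f x - W \<le> f y \<and> f y \<le> f x + W" if y: "y \<in> rect_set Z" for y
  proof -
    have "\<bar>y $ i - x $ i\<bar> \<le> snd Z $ i" for i
      using x y by (auto simp: mem_rect_set abs_le_iff dest!: spec[of _ i])
    then have "(\<Sum>i\<in>UNIV. \<bar>y $ i - x $ i\<bar>) * Cnorm 1 f \<le> W"
      unfolding W_def by (intro mult_right_mono sum_mono Cnorm_nonneg[OF f])
    moreover have "\<bar>f y - f x\<bar> \<le> (\<Sum>i\<in>UNIV. \<bar>y $ i - x $ i\<bar>) * Cnorm 1 f"
      using abs_diff_le_Cnorm1[OF f] rect_set_subset_ucube[OF Z] x y by blast
    ultimately show ?thesis
      by (auto simp: abs_le_iff)
  qed
  have "continuous_on (rect_set Z) (\<lambda>y. exp (f y))"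
    using is_Cm_continuous_on[OF f] rect_set_subset_ucube[OF Z]
    by (auto intro!: continuous_intros intro: continuous_on_subset)
  then have int: "set_integrable lborel (rect_set Z) (\<lambda>y. exp (f y))"
    by (rule set_integrable_rect_set)
  have const: "set_integrable lborel (rect_set Z) (\<lambda>y. c)" for c :: real
    by (intro set_integrable_rect_set continuous_on_const)
  have "rect_vol Z * exp (f x - W) \<le> rect_mass f Z"
    unfolding rect_mass_def set_integral_const_rect_set[OF Z, symmetric]
    by (rule set_integral_mono[OF const int]) (simp add: close)
  moreover have "rect_mass f Z \<le> rect_vol Z * exp (f x + W)"
    unfolding rect_mass_def set_integral_const_rect_set[OF Z, symmetric]
    by (rule set_integral_mono[OF int const]) (simp add: close)
  ultimately show ?thesis
    by (simp add: within_factor_def W_def exp_add exp_diff exp_minus field_simps)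
qed

lemma rect_mass_pos: "cube_subrect Z \<Longrightarrow> is_Cm 1 f \<Longrightarrow> 0 < rect_mass f Z"
  using within_factor_rect_mass fst_in_rect_set rect_vol_pos
  by (metis exp_gt_zero mult_pos_pos within_factor_pos)

lemma within_factor_inverse_rect_vol:
  assumes Z: "cube_subrect Z" and f: "is_Cm 1 f" and x: "x \<in> rect_set Z"
  shows "within_factor ((\<Sum>i\<in>UNIV. snd Z $ i) * Cnorm 1 f) (exp (f x) / rect_mass f Z) (1 / rect_vol Z)"
proof -
  have "within_factor 0 (exp (f x)) (exp (f x))"
    by (simp add: within_factor_def)
  then have "within_factor (0 + (\<Sum>i\<in>UNIV. snd Z $ i) * Cnorm 1 f)
               (exp (f x) / rect_mass f Z) (exp (f x) / (rect_vol Z * exp (f x)))"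
    using within_factor_rect_mass[OF Z f x] rect_mass_pos[OF Z f]
    by (intro within_factor_divide) (simp_all add: within_factor_commute)
  then show ?thesis by simp
qed

lemma cube_subrect_unit: "cube_subrect (0, \<chi> i. 1)"
  by (simp add: cube_subrect_def)

lemma rect_set_unit: "rect_set (0, \<chi> i. 1) = ucube"
  by (auto simp: rect_set_def ucube_def mem_box_cart)

lemma rect_mass_unit: "rect_mass f (0, \<chi> i. 1) = Zfun f"
  by (simp add: rect_mass_def Zfun_def rect_set_unit)

lemma cube_subrect_split:
  assumes "cube_subrect Z"
  shows "cube_subrect (split1 j Z)" "cube_subrect (split2 j Z)"
  using assms[unfolded cube_subrect_def, rule_format]
  by (auto simp: cube_subrect_def split1_def split2_def)
     (use assms[unfolded cube_subrect_def, rule_format, of j] in linarith)+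

lemma snd_split2: "snd (split2 j Z) = snd (split1 j Z)"
  by (simp add: split1_def split2_def)

lemma mem_rect_set_split1:
  assumes "cube_subrect Z"
  shows "x \<in> rect_set (split1 j Z) \<longleftrightarrow> x \<in> rect_set Z \<and> x $ j \<le> fst Z $ j + snd Z $ j / 2"
proof -
  have "0 < snd Z $ j"
    using assms by (simp add: cube_subrect_def)
  then have "(fst Z $ k \<le> x $ k \<and> x $ k \<le> fst Z $ k + (if k = j then snd Z $ k / 2 else snd Z $ k))
      \<longleftrightarrow> (fst Z $ k \<le> x $ k \<and> x $ k \<le> fst Z $ k + snd Z $ k)
          \<and> (k = j \<longrightarrow> x $ j \<le> fst Z $ j + snd Z $ j / 2)" for k
    by auto
  then show ?thesis
    by (simp add: mem_rect_set split1_def all_conj_distrib)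
qed

lemma mem_rect_set_split2:
  assumes "cube_subrect Z"
  shows "x \<in> rect_set (split2 j Z) \<longleftrightarrow> x \<in> rect_set Z \<and> fst Z $ j + snd Z $ j / 2 \<le> x $ j"
proof -
  have "0 < snd Z $ j"
    using assms by (simp add: cube_subrect_def)
  then have "((if k = j then fst Z $ k + snd Z $ k / 2 else fst Z $ k) \<le> x $ k \<and>
        x $ k \<le> (if k = j then fst Z $ k + snd Z $ k / 2 else fst Z $ k)
                 + (if k = j then snd Z $ k / 2 else snd Z $ k))
      \<longleftrightarrow> (fst Z $ k \<le> x $ k \<and> x $ k \<le> fst Z $ k + snd Z $ k)
          \<and> (k = j \<longrightarrow> fst Z $ j + snd Z $ j / 2 \<le> x $ j)" for k
    by auto
  then show ?thesis
    by (simp add: mem_rect_set split2_def all_conj_distrib)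
qed

lemma hyperplane_in_null_sets_lborel: "{x::real^'n. x $ j = c} \<in> null_sets lborel"
proof -
  have "{x::real^'n. x $ j = c} = {x. axis j 1 \<bullet> x = c}"
    by (simp add: cart_eq_inner_axis inner_commute)
  moreover have "negligible {x::real^'n. axis j 1 \<bullet> x = c}"
    by (intro negligible_hyperplane) (auto simp: vec_eq_iff axis_def)
  moreover have "{x::real^'n. x $ j = c} \<in> sets borel"
    by (intro borel_closed closed_Collect_eq) (auto intro: continuous_intros)
  ultimately show ?thesis
    by (simp add: negligible_iff_null_sets null_sets_completion_iff)
qed

lemma AE_not_in_both_halves:
  assumes "cube_subrect Z"
  shows "AE x in lborel. \<not> (x \<in> rect_set (split1 j Z) \<and> x \<in> rect_set (split2 j Z))"
  using AE_not_in[OF hyperplane_in_null_sets_lborel[of j "fst Z $ j + snd Z $ j / 2"]]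
  by eventually_elim (auto simp: mem_rect_set_split1[OF assms] mem_rect_set_split2[OF assms])

lemma rect_set_split:
  assumes "cube_subrect Z"
  shows "rect_set Z = rect_set (split1 j Z) \<union> rect_set (split2 j Z)"
  by (auto simp: mem_rect_set_split1[OF assms] mem_rect_set_split2[OF assms])

lemma rect_mass_split:
  assumes Z: "cube_subrect Z" and f: "continuous_on ucube f"
  shows "rect_mass f Z = rect_mass f (split1 j Z) + rect_mass f (split2 j Z)"
proof -
  note rect_set_split[OF Z, of j]
  moreover have int: "set_integrable lborel (rect_set Z') (\<lambda>x. exp (f x))" if "cube_subrect Z'" for Z'
    using f rect_set_subset_ucube[OF that]
    by (intro set_integrable_rect_set) (auto intro!: continuous_intros intro: continuous_on_subset)
  ultimately show ?thesis
    unfolding rect_mass_def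
    by (simp only:)
       (intro set_integral_Un_AE AE_not_in_both_halves Z rect_set_sets int cube_subrect_split[OF Z])
qed

section \<open>Density of the bisection sampler\<close>

lemma subprob_space_uniform_rect_set: "subprob_space (uniform_measure lborel (rect_set Z))"
proof (rule subprob_spaceI)
  have "emeasure lborel (rect_set Z) < \<infinity>"
    using emeasure_lborel_cbox_finite by (simp add: rect_set_def)
  then have "emeasure lborel (rect_set Z) / emeasure lborel (rect_set Z) \<le> 1"
    by (cases "emeasure lborel (rect_set Z) = 0") simp_all
  then show "emeasure (uniform_measure lborel (rect_set Z)) (space (uniform_measure lborel (rect_set Z)))
               \<le> 1"
    by (simp add: emeasure_uniform_measure[OF rect_set_sets, of UNIV])
qed simp

definition bisect_prob ::
  "((real^'n \<Rightarrow> real) \<Rightarrow> real) \<Rightarrow> (real^'n \<Rightarrow> real) \<Rightarrow> 'n \<Rightarrow> (real^'n) \<times> (real^'n) \<Rightarrow> real" where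
  "bisect_prob Lt f j Z = sigmoid (Lt (rect_fun f (split1 j Z)) - Lt (rect_fun f (split2 j Z)))"

fun bisect_density ::
  "((real^'n \<Rightarrow> real) \<Rightarrow> real) \<Rightarrow> (real^'n \<Rightarrow> real) \<Rightarrow> 'n list \<Rightarrow> (real^'n) \<times> (real^'n)
     \<Rightarrow> real^'n \<Rightarrow> real" where
  "bisect_density Lt f [] Z x = indicator (rect_set Z) x / rect_vol Z"
| "bisect_density Lt f (j # js) Z x =
     bisect_prob Lt f j Z * bisect_density Lt f js (split1 j Z) x
     + (1 - bisect_prob Lt f j Z) * bisect_density Lt f js (split2 j Z) x"

lemma bisect_prob_bounds: "0 \<le> bisect_prob Lt f j Z" "bisect_prob Lt f j Z \<le> 1"
  by (simp_all add: bisect_prob_def sigmoid_bounds)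

lemma bisect_density_nonneg: "cube_subrect Z \<Longrightarrow> 0 \<le> bisect_density Lt f js Z x"
proof (induction js arbitrary: Z)
  case Nil
  then show ?case using rect_vol_pos[OF Nil] by simp
next
  case (Cons j js)
  then show ?case
    using bisect_prob_bounds[of Lt f j Z] cube_subrect_split[OF Cons.prems]
    by (simp add: Cons.IH)
qed

lemma bisect_density_outside:
  "cube_subrect Z \<Longrightarrow> x \<notin> rect_set Z \<Longrightarrow> bisect_density Lt f js Z x = 0"
  by (induction js arbitrary: Z) (simp_all add: cube_subrect_split mem_rect_set_split1 mem_rect_set_split2)

lemma borel_measurable_bisect_density [measurable]:
  "bisect_density Lt f js Z \<in> borel_measurable lborel"
proof (induction js arbitrary: Z)
  case Nil
  have "bisect_density Lt f [] Z = (\<lambda>x. indicator (rect_set Z) x / rect_vol Z)"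
    by (simp add: fun_eq_iff)
  then show ?case by simp
next
  case (Cons j js)
  note [measurable] = Cons.IH
  have "bisect_density Lt f (j # js) Z = (\<lambda>x. bisect_prob Lt f j Z * bisect_density Lt f js (split1 j Z) x
     + (1 - bisect_prob Lt f j Z) * bisect_density Lt f js (split2 j Z) x)"
    by (simp add: fun_eq_iff)
  then show ?case by simp
qed

lemma emeasure_uniform_rect_set:
  assumes Z: "cube_subrect Z" and A: "A \<in> sets lborel"
  shows "emeasure (uniform_measure lborel (rect_set Z)) A
           = (\<integral>\<^sup>+x\<in>A. ennreal (indicator (rect_set Z) x / rect_vol Z) \<partial>lborel)"
proof -
  have "emeasure (uniform_measure lborel (rect_set Z)) A
          = emeasure lborel (rect_set Z \<inter> A) / ennreal (rect_vol Z)"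
    using emeasure_uniform_measure[OF rect_set_sets A] emeasure_rect_set[OF Z] by simp
  also have "\<dots> = ennreal (1 / rect_vol Z) * emeasure lborel (rect_set Z \<inter> A)"
    using rect_vol_pos[OF Z]
    by (simp add: divide_ennreal_def inverse_ennreal mult.commute inverse_eq_divide)
  also have "\<dots> = (\<integral>\<^sup>+x. ennreal (1 / rect_vol Z) * indicator (rect_set Z \<inter> A) x \<partial>lborel)"
    using A by (simp add: nn_integral_cmult_indicator)
  also have "\<dots> = (\<integral>\<^sup>+x\<in>A. ennreal (indicator (rect_set Z) x / rect_vol Z) \<partial>lborel)"
    by (intro nn_integral_cong) (simp split: split_indicator)
  finally show ?thesis .
qed

lemma emeasure_bind_bisect_run:
  assumes "cube_subrect Z" and A: "A \<in> sets lborel"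
  shows "(\<integral>\<^sup>+R. emeasure (uniform_measure lborel (rect_set R)) A \<partial>measure_pmf (bisect_run Lt f js Z))
           = (\<integral>\<^sup>+x\<in>A. ennreal (bisect_density Lt f js Z x) \<partial>lborel)"
  using assms(1)
proof (induction js arbitrary: Z)
  case Nil
  then show ?case
    by (simp add: emeasure_uniform_rect_set[OF Nil A])
next
  case (Cons j js)
  define p where "p = bisect_prob Lt f j Z"
  have p: "0 \<le> p" "p \<le> 1"
    using bisect_prob_bounds by (simp_all add: p_def)
  have "(\<integral>\<^sup>+R. emeasure (uniform_measure lborel (rect_set R)) A \<partial>measure_pmf (bisect_run Lt f (j # js) Z))
     = ennreal p * (\<integral>\<^sup>+x\<in>A. ennreal (bisect_density Lt f js (split1 j Z) x) \<partial>lborel)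
       + ennreal (1 - p) * (\<integral>\<^sup>+x\<in>A. ennreal (bisect_density Lt f js (split2 j Z) x) \<partial>lborel)"
    using p
    by (simp add: bisect_step_def bisect_prob_def p_def Cons.IH cube_subrect_split[OF Cons.prems]
                  mult.commute)
  also have "\<dots> = (\<integral>\<^sup>+x. ennreal p * (ennreal (bisect_density Lt f js (split1 j Z) x) * indicator A x)
       + ennreal (1 - p) * (ennreal (bisect_density Lt f js (split2 j Z) x) * indicator A x) \<partial>lborel)"
    using A by (subst nn_integral_add) (auto simp: nn_integral_cmult)
  also have "\<dots> = (\<integral>\<^sup>+x\<in>A. ennreal (bisect_density Lt f (j # js) Z x) \<partial>lborel)"
  proof (intro nn_integral_cong)
    fix x
    have "ennreal (bisect_density Lt f (j # js) Z x)
        = ennreal p * ennreal (bisect_density Lt f js (split1 j Z) x)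
          + ennreal (1 - p) * ennreal (bisect_density Lt f js (split2 j Z) x)"
      using p bisect_density_nonneg[OF cube_subrect_split(1)[OF Cons.prems]]
        bisect_density_nonneg[OF cube_subrect_split(2)[OF Cons.prems]]
      by (simp add: p_def[symmetric] ennreal_mult ennreal_plus)
    then show "ennreal p * (ennreal (bisect_density Lt f js (split1 j Z) x) * indicator A x)
        + ennreal (1 - p) * (ennreal (bisect_density Lt f js (split2 j Z) x) * indicator A x)
        = ennreal (bisect_density Lt f (j # js) Z x) * indicator A x"
      by (simp add: distrib_right mult.assoc)
  qed
  finally show ?case .
qed

lemma bind_bisect_run_eq_density:
  assumes "cube_subrect Z"
  shows "bind (measure_pmf (bisect_run Lt f js Z)) (\<lambda>R. uniform_measure lborel (rect_set R))
           = density lborel (bisect_density Lt f js Z)"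
    (is "?Q = _")
proof (rule measure_eqI)
  have K: "(\<lambda>R. uniform_measure lborel (rect_set R))
             \<in> measure_pmf (bisect_run Lt f js Z) \<rightarrow>\<^sub>M subprob_algebra lborel"
    by (auto simp: space_subprob_algebra subprob_space_uniform_rect_set)
  then show sets: "sets ?Q = sets (density lborel (bisect_density Lt f js Z))"
    by (subst sets_bind) auto
  fix A assume "A \<in> sets ?Q"
  then have "A \<in> sets lborel"
    using sets by simp
  then show "emeasure ?Q A = emeasure (density lborel (bisect_density Lt f js Z)) A"
    using K by (simp add: emeasure_bind emeasure_bind_bisect_run[OF assms] emeasure_density)
qed

section \<open>Error of the bisection sampler\<close>

lemma within_factor_bisect_prob:
  assumes Z: "cube_subrect Z" and f: "f \<in> Fclass m B" "1 \<le> m"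
    and est: "\<forall>g\<in>Fclass m B. \<bar>Lt g - Lfun g\<bar> \<le> E"
  shows "within_factor (2 * E) (rect_mass f (split1 j Z) / rect_mass f Z) (bisect_prob Lt f j Z)"
    and "within_factor (2 * E) (rect_mass f (split2 j Z) / rect_mass f Z) (1 - bisect_prob Lt f j Z)"
proof -
  define Z1 Z2 where "Z1 = split1 j Z" and "Z2 = split2 j Z"
  have f1: "is_Cm 1 f"
    by (rule Fclass_is_Cm1[OF f])
  have Z12: "cube_subrect Z1" "cube_subrect Z2"
    using cube_subrect_split[OF Z] by (simp_all add: Z1_def Z2_def)
  have vol: "rect_vol Z2 = rect_vol Z1"
    by (simp add: Z1_def Z2_def rect_vol_def snd_split2)
  have L1: "\<bar>Lt (rect_fun f Z1) - ln (rect_mass f Z1 / rect_vol Z1)\<bar> \<le> E"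
    using bspec[OF est rect_fun_in_Fclass[OF Z12(1) f(1)]]
    by (simp add: Lfun_rect_fun[OF Z12(1) is_Cm_continuous_on[OF f1]])
  have L2: "\<bar>Lt (rect_fun f Z2) - ln (rect_mass f Z2 / rect_vol Z1)\<bar> \<le> E"
    using bspec[OF est rect_fun_in_Fclass[OF Z12(2) f(1)]]
    by (simp add: Lfun_rect_fun[OF Z12(2) is_Cm_continuous_on[OF f1]] vol)
  have pos: "0 < rect_mass f Z1 / rect_vol Z1" "0 < rect_mass f Z2 / rect_vol Z1"
    by (simp_all add: rect_mass_pos[OF Z12(1) f1] rect_mass_pos[OF Z12(2) f1] rect_vol_pos[OF Z12(1)])
  have mass: "rect_mass f Z = rect_mass f Z1 + rect_mass f Z2"
    unfolding Z1_def Z2_def by (rule rect_mass_split[OF Z is_Cm_continuous_on[OF f1]])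
  have sum: "rect_mass f Z1 / rect_vol Z1 + rect_mass f Z2 / rect_vol Z1 = rect_mass f Z / rect_vol Z1"
            "rect_mass f Z2 / rect_vol Z1 + rect_mass f Z1 / rect_vol Z1 = rect_mass f Z / rect_vol Z1"
    by (simp_all add: mass add_divide_distrib)
  have ratio:
    "rect_mass f Z' / rect_vol Z1 / (rect_mass f Z / rect_vol Z1) = rect_mass f Z' / rect_mass f Z"
    for Z'
    using rect_vol_pos[OF Z12(1)] by (cases "rect_mass f Z = 0") simp_all
  show "within_factor (2 * E) (rect_mass f (split1 j Z) / rect_mass f Z) (bisect_prob Lt f j Z)"
    using within_factor_sigmoid_diff[OF pos L1 L2]
    unfolding sum ratio by (simp add: bisect_prob_def Z1_def Z2_def)
  show "within_factor (2 * E) (rect_mass f (split2 j Z) / rect_mass f Z) (1 - bisect_prob Lt f j Z)"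
    using within_factor_sigmoid_diff[OF pos(2,1) L2 L1]
    unfolding sum ratio by (simp add: bisect_prob_def one_minus_sigmoid Z1_def Z2_def)
qed

text \<open>The first term is the factor exp (2 E) lost in each bisection step, the second bounds the
  oscillation of f on the final rectangle, whose sides are snd Z $ i / 2 ^ count_list js i.\<close>
definition bisect_error :: "real \<Rightarrow> (real^'n \<Rightarrow> real) \<Rightarrow> 'n list \<Rightarrow> (real^'n) \<times> (real^'n) \<Rightarrow> real" where
  "bisect_error E f js Z =
     2 * real (length js) * E + (\<Sum>i\<in>UNIV. snd Z $ i / 2 ^ count_list js i) * Cnorm 1 f"

lemma bisect_error_Cons:
  "bisect_error E f (j # js) Z = 2 * E + bisect_error E f js (split1 j Z)"
  "bisect_error E f (j # js) Z = 2 * E + bisect_error E f js (split2 j Z)"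
proof -
  have "(\<Sum>i\<in>UNIV. snd Z $ i / 2 ^ count_list (j # js) i)
          = (\<Sum>i\<in>UNIV. snd (split1 j Z) $ i / 2 ^ count_list js i)"
    by (intro sum.cong) (auto simp: split1_def)
  then show "bisect_error E f (j # js) Z = 2 * E + bisect_error E f js (split1 j Z)"
    and "bisect_error E f (j # js) Z = 2 * E + bisect_error E f js (split2 j Z)"
    by (simp_all add: bisect_error_def snd_split2 algebra_simps)
qed

lemma within_factor_bisect_density:
  assumes f: "f \<in> Fclass m B" "1 \<le> m"
    and est: "\<forall>g\<in>Fclass m B. \<bar>Lt g - Lfun g\<bar> \<le> E"
    and Z: "cube_subrect Z"
  shows "AE x in lborel. x \<in> rect_set Z \<longrightarrow>
           within_factor (bisect_error E f js Z) (exp (f x) / rect_mass f Z) (bisect_density Lt f js Z x)"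
  using Z
proof (induction js arbitrary: Z)
  case Nil
  then show ?case
    using within_factor_inverse_rect_vol[OF Nil Fclass_is_Cm1[OF f]]
    by (intro AE_I2) (simp add: bisect_error_def)
next
  case (Cons j js)
  have step: "within_factor (2 * E + bisect_error E f js Z') (exp (f x) / rect_mass f Z)
                (q * bisect_density Lt f js Z' x)"
    if "cube_subrect Z'" "within_factor (2 * E) (rect_mass f Z' / rect_mass f Z) q"
      "within_factor (bisect_error E f js Z') (exp (f x) / rect_mass f Z') (bisect_density Lt f js Z' x)"
    for Z' q x
  proof -
    have "0 < rect_mass f Z'" "0 < rect_mass f Z"
      using rect_mass_pos[OF _ Fclass_is_Cm1[OF f]] that(1) Cons.prems by auto
    with within_factor_mult[OF _ _ that(2,3)] show ?thesis
      by simp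
  qed
  have Z12: "cube_subrect (split1 j Z)" "cube_subrect (split2 j Z)"
    using cube_subrect_split[OF Cons.prems] by auto
  note p = within_factor_bisect_prob[OF Cons.prems f est, of j]
  show ?case
    using Cons.IH[OF Z12(1)] Cons.IH[OF Z12(2)] AE_not_in_both_halves[OF Cons.prems, of j]
  proof eventually_elim
    case (elim x)
    show ?case
    proof
      assume "x \<in> rect_set Z"
      then consider "x \<in> rect_set (split1 j Z)" "x \<notin> rect_set (split2 j Z)"
        | "x \<in> rect_set (split2 j Z)" "x \<notin> rect_set (split1 j Z)"
        using elim(3) rect_set_split[OF Cons.prems, of j] by blast
      then show "within_factor (bisect_error E f (j # js) Z) (exp (f x) / rect_mass f Z)
                   (bisect_density Lt f (j # js) Z x)"
      proof cases
        case 1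
        with step[OF Z12(1) p(1)] elim(1) show ?thesis
          by (simp add: bisect_density_outside[OF Z12(2)] bisect_error_Cons(1))
      next
        case 2
        with step[OF Z12(2) p(2)] elim(2) show ?thesis
          by (simp add: bisect_density_outside[OF Z12(1)] bisect_error_Cons(2))
      qed
    qed
  qed
qed

lemma count_list_upt: "k < n \<Longrightarrow> count_list [0..<n] k = 1"
  by (induction n) auto

lemma count_list_bisect_schedule:
  fixes ord :: "nat \<Rightarrow> 'n::finite"
  assumes "bij_betw ord {..<CARD('n)} UNIV"
  shows "count_list (bisect_schedule ord M) i = M"
proof -
  obtain k where k: "k < CARD('n)" "ord k = i"
    using assms by (metis bij_betw_iff_bijections lessThan_iff UNIV_I)
  have "inj_on ord (set [0..<CARD('n)])"
    using assms by (simp add: bij_betw_def atLeast0LessThan)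
  then have "count_list (map ord [0..<CARD('n)]) i = 1"
    using count_list_inj_map[of ord "[0..<CARD('n)]" k] count_list_upt k by simp
  moreover have "count_list (concat (replicate M xs)) i = M * count_list xs i" for xs
    by (induction M) auto
  ultimately show ?thesis
    by (simp add: bisect_schedule_def)
qed

lemma bisect_error_bisect_schedule:
  fixes ord :: "nat \<Rightarrow> 'n::finite"
  assumes "bij_betw ord {..<CARD('n)} UNIV"
  shows "bisect_error E f (bisect_schedule ord M) (0, \<chi> i. 1)
           = 2 * real M * real CARD('n) * E + 2 powr (- real M) * real CARD('n) * Cnorm 1 f"
proof -
  have "length (bisect_schedule ord M) = M * CARD('n)"
    by (simp add: bisect_schedule_def length_concat sum_list_replicate)
  moreover have "(\<Sum>i\<in>UNIV. 1 / 2 ^ count_list (bisect_schedule ord M) i :: real)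
                   = 2 powr (- real M) * real CARD('n)"
    by (simp add: count_list_bisect_schedule[OF assms] powr_minus powr_realpow divide_inverse)
  ultimately show ?thesis
    by (simp add: bisect_error_def)
qed

lemma Zfun_nonneg: "0 \<le> Zfun f"
  unfolding Zfun_def set_lebesgue_integral_def by simp

lemma borel_measurable_Gibbs_density:
  assumes "continuous_on ucube f"
  shows "(\<lambda>x. indicator ucube x * exp (f x) / Zfun f) \<in> borel_measurable borel"
proof -
  have "(\<lambda>x. indicator ucube x *\<^sub>R exp (f x)) \<in> borel_measurable borel"
    using assms
    by (intro borel_measurable_continuous_on_indicator continuous_intros) (simp_all add: ucube_eq_cbox)
  then have [measurable]: "(\<lambda>x. indicator ucube x * exp (f x)) \<in> borel_measurable borel"
    by simp
  show ?thesis by measurable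
qed

lemma finite_measure_Pdist:
  assumes "continuous_on ucube f"
  shows "finite_measure (Pdist f)"
proof (rule finite_measureI)
  have "integrable lborel (\<lambda>x. (indicator ucube x *\<^sub>R exp (f x)) / Zfun f)"
    using assms by (intro integrable_divide_zero borel_integrable_compact continuous_intros)
                   (simp_all add: ucube_eq_cbox)
  then have "(\<integral>\<^sup>+x. ennreal (indicator ucube x * exp (f x) / Zfun f) \<partial>lborel) \<noteq> \<infinity>"
    by (simp add: nn_integral_eq_integral Zfun_nonneg)
  then show "emeasure (Pdist f) (space (Pdist f)) \<noteq> \<infinity>"
    using borel_measurable_Gibbs_density[OF assms] by (simp add: Pdist_def emeasure_density)
qed

lemma bisect_sampler_eq_density:
  "bisect_sampler Lt ord M f = density lborel (bisect_density Lt f (bisect_schedule ord M) (0, \<chi> i. 1))"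
  using bind_bisect_run_eq_density[OF cube_subrect_unit]
  by (simp add: bisect_sampler_def rect_set_def)

theorem theorem14:
  fixes m :: nat and B E :: real and M :: nat
    and f :: "real^'n \<Rightarrow> real"
    and Lt :: "(real^'n \<Rightarrow> real) \<Rightarrow> real"
    and ord :: "nat \<Rightarrow> 'n"
  assumes "m \<ge> 1" and "B \<ge> 0"
    and "f \<in> Fclass m B"
    and "E \<ge> 0"
    and "\<forall>g \<in> Fclass m B. \<bar>Lt g - Lfun g\<bar> \<le> E"
    and "bij_betw ord {..<CARD('n)} UNIV"
  shows "D_suplog (bisect_sampler Lt ord M f) (Pdist f)
           \<le> ereal (2 * real M * real CARD('n) * E
                    + 2 powr (- real M) * real CARD('n) * Cnorm 1 f)"
proof -
  let ?js = "bisect_schedule ord M" and ?Z = "(0, \<chi> i. 1) :: (real^'n) \<times> (real^'n)"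
  define s where "s = bisect_density Lt f ?js ?Z"
  define q where "q x = indicator ucube x * exp (f x) / Zfun f" for x
  have f: "is_Cm 1 f" "continuous_on ucube f"
    using Fclass_is_Cm1[OF assms(3,1)] by (simp_all add: is_Cm_continuous_on)
  have Z_pos: "0 < Zfun f"
    using rect_mass_pos[OF cube_subrect_unit f(1)] by (simp add: rect_mass_unit)
  have "D_suplog (density lborel s) (density lborel q) \<le> ereal (bisect_error E f ?js ?Z)"
  proof (rule D_suplog_density_le)
    show "s \<in> borel_measurable lborel" "q \<in> borel_measurable lborel"
      using borel_measurable_Gibbs_density[OF f(2)] by (simp_all add: s_def q_def[abs_def])
    show "0 \<le> s x" "0 \<le> q x" for x
      using Z_pos by (simp_all add: s_def q_def bisect_density_nonneg cube_subrect_unit)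
    show "sigma_finite_measure (density lborel q)"
      using finite_measure_Pdist[OF f(2)]
      by (simp add: Pdist_def q_def finite_measure.sigma_finite_measure)
    show "AE x in lborel. q x = 0 \<longrightarrow> s x = 0"
      using Z_pos
      by (intro AE_I2) (auto simp: q_def s_def bisect_density_outside cube_subrect_unit rect_set_unit
                             split: split_indicator)
    show "AE x in lborel. 0 < q x \<longrightarrow> within_factor (bisect_error E f ?js ?Z) (q x) (s x)"
      using within_factor_bisect_density[OF assms(3,1,5) cube_subrect_unit]
      by eventually_elim (auto simp: q_def s_def rect_set_unit rect_mass_unit split: split_indicator)
  qed
  then show ?thesis
    using bisect_error_bisect_schedule[OF assms(6), of E f]
    by (simp add: bisect_sampler_eq_density Pdist_def q_def[abs_def] s_def)
qed

end
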